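(* Let $(r_n)_{n\ge1}\in\mathrm{P}_d$. Then for $\mathcal{L}^d$-almost every $x\in\mathbb{R}^d$, the sequence $(\{nx\})_{n\ge1}$ is eutaxic in $(0,1)^d$ with respect to $(r_n)_{n\ge1}$, i.e. for $\mathcal{L}^d$-almost every $y\in(0,1)^d$ there are infinitely many $n\ge1$ with $|y-\{nx\}|<r_n$.
   Context: Fix a norm $|\cdot|$ on $\mathbb{R}^d$; $\mathcal{L}^d$ is Lebesgue measure. $\{z\}$ denotes the coordinatewise fractional part of $z\in\mathbb{R}^d$. $\mathrm{P}_d$ is the set of real sequences $(r_n)_{n\ge1}$ with $r_{n+1}\le r_n$ for all $n$, $r_n\to0$ and $\sum_nr_n^d=\infty$. *)

theory Defs
  imports "HOL-Analysis.Analysis"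
begin

text \<open>A norm on R^d (d = CARD('n)), in the usual axiomatic sense.\<close>
definition is_norm :: "(real ^ 'n \<Rightarrow> real) \<Rightarrow> bool" where
  "is_norm N \<longleftrightarrow>
     (\<forall>x. N x = 0 \<longleftrightarrow> x = 0) \<and>
     (\<forall>x y. N (x + y) \<le> N x + N y) \<and>
     (\<forall>c x. N (c *\<^sub>R x) = \<bar>c\<bar> * N x)"

definition vfrac :: "real ^ 'n \<Rightarrow> real ^ 'n" where
  "vfrac z = (\<chi> i. frac (z $ i))"

text \<open>The class P_d of sequences (r_n)_{n>=1}; the value r 0 is irrelevant.\<close>
definition P_class :: "nat \<Rightarrow> (nat \<Rightarrow> real) \<Rightarrow> bool" where
  "P_class d r \<longleftrightarrow>
     (\<forall>n\<ge>1. r (Suc n) \<le> r n) \<and> r \<longlonglongrightarrow> 0 \<and>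
     \<not> summable (\<lambda>n. r (Suc n) ^ d)"

definition open_cube :: "(real ^ 'n) set" where
  "open_cube = {y. \<forall>i. 0 < y $ i \<and> y $ i < 1}"

end

theory Submission
  imports Defs "HOL-Probability.Probability_Measure"
begin

text \<open>Pick \<open>(x, y)\<close> uniformly in \<open>[0,1)\<^sup>d \<times> [0,1)\<^sup>d\<close> and let \<open>E\<^sub>n\<close> be the event that
  \<open>y - n x\<close> lies within \<open>N\<close>-distance \<open>r\<^sub>n\<close> of the lattice \<open>\<int>\<^sup>d\<close>. Since integrals of
  \<open>\<int>\<^sup>d\<close>-periodic functions over the unit cube are invariant under translations and under
  dilations by positive integers, \<open>P(E\<^sub>n)\<close> is the volume of the \<open>r\<^sub>n\<close>-neighbourhood of \<open>\<int>\<^sup>d\<close>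
  in the cube, which is of order \<open>r\<^sub>n\<^sup>d\<close>, and \<open>E\<^sub>n\<close>, \<open>E\<^sub>m\<close> are independent for \<open>n \<noteq> m\<close>. As
  \<open>\<Sum> r\<^sub>n\<^sup>d = \<infinity>\<close>, the second moment form of the Borel--Cantelli lemma shows that almost every
  \<open>(x, y)\<close> lies in infinitely many \<open>E\<^sub>n\<close>. Fubini and the periodicity in \<open>x\<close> turn this into the
  statement for almost every \<open>x \<in> \<real>\<^sup>d\<close>, and for \<open>y\<close> in the open cube and \<open>r\<^sub>n\<close> small, the
  lattice point near \<open>y - n x\<close> is \<open>-\<lfloor>n x\<rfloor>\<close>, i.e. \<open>N (y - {n x}) < r\<^sub>n\<close>.\<close>

section \<open>Borel--Cantelli for quasi-independent events\<close>

lemma (in prob_space) variance_sum_indicator_le: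
  assumes A: "\<And>n. A n \<in> events"
    and quasi_indep: "\<And>n m. n \<noteq> m \<Longrightarrow> prob (A n \<inter> A m) \<le> prob (A n) * prob (A m)"
    and I: "finite I"
  shows "variance (\<lambda>x. \<Sum>n\<in>I. indicator (A n) x) \<le> (\<Sum>n\<in>I. prob (A n))"
proof -
  define S where "S x = (\<Sum>n\<in>I. indicator (A n) x :: real)" for x
  define \<mu> where "\<mu> = (\<Sum>n\<in>I. prob (A n))"
  have int_ind: "integrable M (indicator B :: 'a \<Rightarrow> real)" if "B \<in> events" for B
    using that by (simp add: integrable_indicator_iff less_top[symmetric])
  have S_sq: "(S x)\<^sup>2 = (\<Sum>n\<in>I. \<Sum>m\<in>I. indicator (A n \<inter> A m) x)" for x
    unfolding S_def power2_eq_square sum_product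
    by (intro sum.cong refl) (auto simp: indicator_def)
  have int_S: "integrable M S" and int_S_sq: "integrable M (\<lambda>x. (S x)\<^sup>2)"
    unfolding S_sq unfolding S_def using A by (auto intro!: Bochner_Integration.integrable_sum int_ind)
  have "expectation (\<lambda>x. (S x)\<^sup>2) = (\<Sum>n\<in>I. \<Sum>m\<in>I. prob (A n \<inter> A m))"
    unfolding S_sq using A by (simp add: int_ind integral_sum)
  also have "\<dots> \<le> (\<Sum>n\<in>I. \<Sum>m\<in>I. (if n = m then prob (A n) else 0) + prob (A n) * prob (A m))"
    by (intro sum_mono) (auto dest: quasi_indep)
  also have "\<dots> = \<mu> + \<mu>\<^sup>2"
    using I by (simp add: sum.distrib \<mu>_def power2_eq_square sum_product)
  finally have "expectation (\<lambda>x. (S x)\<^sup>2) \<le> \<mu> + \<mu>\<^sup>2" .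
  moreover have "expectation S = \<mu>"
    unfolding S_def \<mu>_def using A by (simp add: int_ind integral_sum)
  ultimately show ?thesis
    using variance_eq[OF int_S int_S_sq] by (simp add: S_def[abs_def] \<mu>_def)
qed

text \<open>The second moment method: by Chebyshev, the number of events that occur deviates from its
  mean by the whole mean with probability at most the variance over the squared mean.\<close>

lemma (in prob_space) prob_none_le_inverse_sum:
  assumes A: "\<And>n. A n \<in> events"
    and quasi_indep: "\<And>n m. n \<noteq> m \<Longrightarrow> prob (A n \<inter> A m) \<le> prob (A n) * prob (A m)"
    and I: "finite I" and pos: "0 < (\<Sum>n\<in>I. prob (A n))"
  shows "prob {x\<in>space M. \<forall>n\<in>I. x \<notin> A n} \<le> 1 / (\<Sum>n\<in>I. prob (A n))"
proof -
  define S where "S x = (\<Sum>n\<in>I. indicator (A n) x :: real)" for x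
  define \<mu> where "\<mu> = (\<Sum>n\<in>I. prob (A n))"
  have [measurable]: "A n \<in> sets M" for n using A by simp
  have int_S_sq: "integrable M (\<lambda>x. (S x)\<^sup>2)"
    unfolding S_def power2_eq_square sum_product
    by (intro Bochner_Integration.integrable_sum)
       (auto simp: indicator_inter_arith[symmetric] integrable_indicator_iff less_top[symmetric])
  have "expectation S = \<mu>"
    unfolding S_def \<mu>_def using A
    by (simp add: integral_sum integrable_indicator_iff less_top[symmetric])
  have "prob {x\<in>space M. \<forall>n\<in>I. x \<notin> A n} \<le> prob {x\<in>space M. \<bar>S x - expectation S\<bar> \<ge> \<mu>}"
    using \<open>expectation S = \<mu>\<close> pos
    by (intro finite_measure_mono) (auto simp: S_def \<mu>_def)
  also have "\<dots> \<le> variance S / \<mu>\<^sup>2"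
    using pos int_S_sq unfolding \<mu>_def S_def by (intro Chebyshev_inequality) auto
  also have "\<dots> \<le> \<mu> / \<mu>\<^sup>2"
    using variance_sum_indicator_le[OF A quasi_indep I] pos
    by (intro divide_right_mono) (auto simp: S_def[abs_def] \<mu>_def)
  finally show ?thesis using pos by (simp add: \<mu>_def power2_eq_square)
qed

lemma not_summable_tail_unbounded:
  fixes f :: "nat \<Rightarrow> real"
  assumes nonneg: "\<And>n. 0 \<le> f n" and diverges: "\<not> summable f"
  shows "\<exists>K. B < (\<Sum>n\<in>{m..<m+K}. f n)"
proof (rule ccontr)
  assume "\<not> ?thesis"
  then have tail_le: "(\<Sum>n\<in>{m..<m+K}. f n) \<le> B" for K by (auto simp: not_less)
  have "(\<Sum>n<k. f n) \<le> (\<Sum>n<m. f n) + B" for k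
  proof -
    have "(\<Sum>n<k. f n) \<le> (\<Sum>n\<in>{..<m} \<union> {m..<m+k}. f n)"
      by (rule sum_mono2) (auto simp: nonneg)
    also have "\<dots> = (\<Sum>n<m. f n) + (\<Sum>n\<in>{m..<m+k}. f n)"
      by (rule sum.union_disjoint) auto
    finally show ?thesis using tail_le[of k] by simp
  qed
  then have "summable f" by (intro summableI_nonneg_bounded[OF nonneg])
  with diverges show False ..
qed

lemma (in prob_space) prob_avoid_tail_eq_0:
  assumes A: "\<And>n. A n \<in> events"
    and quasi_indep: "\<And>n m. n \<noteq> m \<Longrightarrow> prob (A n \<inter> A m) \<le> prob (A n) * prob (A m)"
    and diverges: "\<not> summable (\<lambda>n. prob (A n))"
  shows "prob {x\<in>space M. \<forall>n\<in>{m..}. x \<notin> A n} = 0"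
proof -
  let ?E = "{x\<in>space M. \<forall>n\<in>{m..}. x \<notin> A n}"
  have small: "prob ?E \<le> \<epsilon>" if "0 < \<epsilon>" for \<epsilon>
  proof -
    obtain K where K: "1 / \<epsilon> < (\<Sum>n\<in>{m..<m+K}. prob (A n))"
      using not_summable_tail_unbounded[OF measure_nonneg diverges, of "1 / \<epsilon>" m] by blast
    moreover have "0 < 1 / \<epsilon>" using that by simp
    ultimately have pos: "0 < (\<Sum>n\<in>{m..<m+K}. prob (A n))" by linarith
    have "prob ?E \<le> prob {x\<in>space M. \<forall>n\<in>{m..<m+K}. x \<notin> A n}"
      using A by (intro finite_measure_mono) auto
    also have "\<dots> \<le> 1 / (\<Sum>n\<in>{m..<m+K}. prob (A n))"
      using pos by (intro prob_none_le_inverse_sum[OF A quasi_indep]) auto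
    also have "\<dots> \<le> \<epsilon>"
      using K that pos by (simp add: divide_less_eq divide_le_eq mult.commute)
    finally show ?thesis .
  qed
  have "prob ?E \<le> 0"
  proof (rule field_le_epsilon)
    show "prob ?E \<le> 0 + \<epsilon>" if "0 < \<epsilon>" for \<epsilon> using small[OF that] by simp
  qed
  then show ?thesis using measure_nonneg[of M ?E] by linarith
qed

lemma (in prob_space) AE_frequently_quasi_indep:
  assumes A: "\<And>n. A n \<in> events"
    and quasi_indep: "\<And>n m. n \<noteq> m \<Longrightarrow> prob (A n \<inter> A m) \<le> prob (A n) * prob (A m)"
    and diverges: "\<not> summable (\<lambda>n. prob (A n))"
  shows "AE x in M. \<exists>\<^sub>\<infinity>n. x \<in> A n"
proof -
  have "AE x in M. \<exists>n\<ge>m. x \<in> A n" for m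
  proof (rule AE_I')
    have "{x\<in>space M. \<forall>n\<in>{m..}. x \<notin> A n} \<in> events" using A by measurable
    then show "{x\<in>space M. \<forall>n\<in>{m..}. x \<notin> A n} \<in> null_sets M"
      using prob_avoid_tail_eq_0[OF assms, of m] by (simp add: emeasure_eq_measure null_sets_def)
  qed auto
  then have "AE x in M. \<forall>m. \<exists>n\<ge>m. x \<in> A n" by (simp add: AE_all_countable)
  then show ?thesis by (simp add: INFM_nat_le)
qed

section \<open>Norms on \<open>\<real>\<^sup>n\<close>\<close>

context
  fixes N :: "real ^ 'n \<Rightarrow> real"
  assumes N: "is_norm N"
begin

lemma is_norm_eq_0_iff: "N x = 0 \<longleftrightarrow> x = 0"
  using N unfolding is_norm_def by blast

lemma is_norm_triangle: "N (x + y) \<le> N x + N y"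
  using N unfolding is_norm_def by blast

lemma is_norm_scaleR: "N (c *\<^sub>R x) = \<bar>c\<bar> * N x"
  using N unfolding is_norm_def by blast

lemma is_norm_zero: "N 0 = 0"
  by (simp add: is_norm_eq_0_iff)

lemma is_norm_minus_commute: "N (x - y) = N (y - x)"
  using is_norm_scaleR[of "-1" "x - y"] by simp

lemma is_norm_nonneg: "0 \<le> N x"
  using is_norm_triangle[of x "-x"] is_norm_scaleR[of "-1" x] is_norm_eq_0_iff[of 0] by simp

lemma is_norm_sum: "N (sum f S) \<le> (\<Sum>i\<in>S. N (f i))"
proof (induction S rule: infinite_finite_induct)
  case (insert i S)
  then show ?case using is_norm_triangle[of "f i" "sum f S"] by simp
qed (simp_all add: is_norm_zero)

lemma is_norm_le_norm:
  obtains C where "0 < C" "\<And>v. N v \<le> C * norm v"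
proof
  define C where "C = (\<Sum>i\<in>UNIV. N (axis i (1::real))) + 1"
  show "N v \<le> C * norm v" for v
  proof -
    have "N v = N (\<Sum>i\<in>UNIV. v $ i *\<^sub>R axis i 1)"
      using basis_expansion[of v] by (simp add: scalar_mult_eq_scaleR)
    also have "\<dots> \<le> (\<Sum>i\<in>UNIV. N (v $ i *\<^sub>R axis i 1))"
      by (rule is_norm_sum)
    also have "\<dots> = (\<Sum>i\<in>UNIV. \<bar>v $ i\<bar> * N (axis i 1))"
      by (simp add: is_norm_scaleR)
    also have "\<dots> \<le> (\<Sum>i\<in>UNIV. norm v * N (axis i 1))"
      by (intro sum_mono mult_right_mono) (auto simp: is_norm_nonneg component_le_norm_cart)
    also have "\<dots> \<le> C * norm v"
      by (simp add: C_def sum_distrib_left[symmetric] distrib_left mult.commute)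
    finally show ?thesis .
  qed
  show "0 < C" unfolding C_def by (simp add: sum_nonneg is_norm_nonneg add_nonneg_pos)
qed

lemma is_norm_continuous_on: "continuous_on S N"
proof -
  obtain C where C: "0 < C" "\<And>v. N v \<le> C * norm v"
    using is_norm_le_norm by blast
  have "C-lipschitz_on S N"
  proof (rule lipschitz_onI)
    fix x y
    have "dist (N x) (N y) \<le> N (x - y)"
      using is_norm_triangle[of "x - y" y] is_norm_triangle[of "y - x" x]
      by (simp add: dist_real_def abs_le_iff is_norm_minus_commute[of x y])
    also have "\<dots> \<le> C * dist x y" using C(2) by (simp add: dist_norm)
    finally show "dist (N x) (N y) \<le> C * dist x y" .
  qed (use C in simp)
  then show ?thesis by (rule lipschitz_on_continuous_on)
qed

text \<open>The lower comparison uses the minimum of \<open>N\<close> on the (compact) Euclidean unit sphere.\<close>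

lemma is_norm_ge_norm:
  obtains c where "0 < c" "\<And>v. c * norm v \<le> N v"
proof -
  obtain i :: 'n where True by simp
  have "sphere (0::real^'n) 1 \<noteq> {}"
    using norm_axis_1[of i] by (auto intro!: exI[of _ "axis i 1"])
  then obtain x0 where x0: "x0 \<in> sphere 0 1" and min: "\<And>y. y \<in> sphere 0 1 \<Longrightarrow> N x0 \<le> N y"
    using continuous_attains_inf[OF compact_sphere _ is_norm_continuous_on] by blast
  have "N x0 * norm v \<le> N v" for v
  proof (cases "v = 0")
    case False
    then have "N x0 \<le> N ((1 / norm v) *\<^sub>R v)" by (intro min) auto
    with False show ?thesis by (simp add: is_norm_scaleR field_simps)
  qed (simp add: is_norm_zero)
  moreover have "0 < N x0"
    using x0 is_norm_nonneg[of x0] is_norm_eq_0_iff[of x0] by fastforce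
  ultimately show ?thesis using that by blast
qed

lemma is_norm_ge_abs_component:
  obtains c where "0 < c" "\<And>v i. c * \<bar>v $ i\<bar> \<le> N v"
proof -
  obtain c where c: "0 < c" "\<And>v. c * norm v \<le> N v" using is_norm_ge_norm by blast
  have "c * \<bar>v $ i\<bar> \<le> N v" for v i
    using mult_left_mono[OF component_le_norm_cart[of v i], of c] c(1) c(2)[of v] by linarith
  with c(1) show ?thesis using that by blast
qed

end

section \<open>Lattice-periodic functions on the unit cube\<close>

definition integer_lattice :: "(real ^ 'n) set" where
  "integer_lattice = {j. \<forall>i. j $ i \<in> \<int>}"

definition unit_cube :: "(real ^ 'n) set" where
  "unit_cube = {x. \<forall>i. 0 \<le> x $ i \<and> x $ i < 1}"

definition vfloor :: "real ^ 'n \<Rightarrow> real ^ 'n" where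
  "vfloor v = (\<chi> i. of_int \<lfloor>v $ i\<rfloor>)"

definition lattice_periodic :: "(real ^ 'n \<Rightarrow> 'b) \<Rightarrow> bool" where
  "lattice_periodic f \<longleftrightarrow> (\<forall>u j. j \<in> integer_lattice \<longrightarrow> f (u + j) = f u)"

lemma integer_lattice_add: "a \<in> integer_lattice \<Longrightarrow> b \<in> integer_lattice \<Longrightarrow> a + b \<in> integer_lattice"
  by (auto simp: integer_lattice_def)

lemma integer_lattice_uminus: "a \<in> integer_lattice \<Longrightarrow> - a \<in> integer_lattice"
  by (auto simp: integer_lattice_def)

lemma integer_lattice_scaleR_of_nat: "a \<in> integer_lattice \<Longrightarrow> of_nat n *\<^sub>R a \<in> integer_lattice"
  by (auto simp: integer_lattice_def)

lemma vfloor_in_integer_lattice: "vfloor v \<in> integer_lattice"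
  by (auto simp: vfloor_def integer_lattice_def)

lemma countable_integer_lattice: "countable integer_lattice"
proof -
  have "integer_lattice \<subseteq> vec_lambda ` (UNIV \<rightarrow>\<^sub>E \<int>)"
  proof
    fix j :: "real ^ 'n" assume "j \<in> integer_lattice"
    then show "j \<in> vec_lambda ` (UNIV \<rightarrow>\<^sub>E \<int>)"
      by (intro image_eqI[of _ _ "\<lambda>i. j $ i"]) (auto simp: integer_lattice_def)
  qed
  moreover have "countable (vec_lambda ` (UNIV \<rightarrow>\<^sub>E (\<int> :: real set)) :: (real ^ 'n) set)"
    by (intro countable_image countable_PiE) (auto simp: countable_int)
  ultimately show ?thesis by (rule countable_subset)
qed

lemma unit_cube_borel [measurable]: "unit_cube \<in> sets borel"
proof -
  have "unit_cube = (\<Inter>i. {x :: real ^ 'n. 0 \<le> x $ i} \<inter> {x. x $ i < 1})"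
    by (auto simp: unit_cube_def)
  also have "\<dots> \<in> sets borel"
    by (intro sets.countable_INT' sets.Int borel_closed borel_open)
       (auto intro: closed_halfspace_component_ge open_halfspace_component_lt)
  finally show ?thesis .
qed

lemma emeasure_unit_cube: "emeasure lborel (unit_cube :: (real ^ 'n) set) = 1"
proof -
  have One: "(\<Sum>x\<in>Basis. x $ i) = (1::real)" for i :: 'n
    using cart_eq_inner_axis[of One i] by simp
  have "box 0 One \<subseteq> (unit_cube :: (real ^ 'n) set)" "unit_cube \<subseteq> cbox 0 (One :: real ^ 'n)"
    by (force simp: unit_cube_def mem_box_cart One less_imp_le)+
  moreover have "emeasure lborel (box 0 (One :: real ^ 'n)) = 1"
    "emeasure lborel (cbox 0 (One :: real ^ 'n)) = 1"
    by (simp_all add: emeasure_lborel_box_eq emeasure_lborel_cbox_eq inner_Basis)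
  ultimately show ?thesis
    by (metis antisym emeasure_mono sets_lborel borel_open borel_closed unit_cube_borel
        open_box closed_cbox)
qed

lemma add_in_unit_cube_iff:
  assumes "j \<in> integer_lattice"
  shows "v + j \<in> unit_cube \<longleftrightarrow> j = - vfloor v"
proof -
  have "0 \<le> v $ i + j $ i \<and> v $ i + j $ i < 1 \<longleftrightarrow> j $ i = - of_int \<lfloor>v $ i\<rfloor>" for i
  proof -
    obtain t where t: "j $ i = of_int t"
      using assms by (auto simp: integer_lattice_def elim: Ints_cases)
    have "0 \<le> v $ i + j $ i \<and> v $ i + j $ i < 1 \<longleftrightarrow> \<lfloor>v $ i\<rfloor> = - t"
      unfolding floor_eq_iff t by auto
    then show ?thesis using t by (metis of_int_eq_iff of_int_minus minus_minus)
  qed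
  then show ?thesis by (auto simp: unit_cube_def vfloor_def vec_eq_iff)
qed

lemma nn_integral_lattice_unit_cube_add:
  "(\<integral>\<^sup>+ j. indicator unit_cube (v + j) \<partial>count_space integer_lattice) = 1"
proof -
  have "(\<integral>\<^sup>+ j. indicator unit_cube (v + j) \<partial>count_space integer_lattice)
      = (\<integral>\<^sup>+ j. indicator {- vfloor v} j \<partial>count_space integer_lattice)"
    by (intro nn_integral_cong) (auto simp: add_in_unit_cube_iff indicator_def)
  also have "\<dots> = 1"
    using integer_lattice_uminus[OF vfloor_in_integer_lattice[of v]] by simp
  finally show ?thesis .
qed

lemma nn_integral_lattice_unit_cube_diff:
  "(\<integral>\<^sup>+ j. indicator unit_cube (v - j) \<partial>count_space integer_lattice) = 1"
proof -
  have "(\<integral>\<^sup>+ j. indicator unit_cube (v - j) \<partial>count_space integer_lattice)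
      = (\<integral>\<^sup>+ j. indicator {vfloor v} j \<partial>count_space integer_lattice)"
    using add_in_unit_cube_iff[OF integer_lattice_uminus, of _ v]
    by (intro nn_integral_cong) (auto simp: indicator_def)
  also have "\<dots> = 1" using vfloor_in_integer_lattice[of v] by simp
  finally show ?thesis .
qed

lemma nn_integral_lborel_add:
  fixes f :: "'a::euclidean_space \<Rightarrow> ennreal"
  assumes [measurable]: "f \<in> borel_measurable borel"
  shows "(\<integral>\<^sup>+ x. f (x + c) \<partial>lborel) = (\<integral>\<^sup>+ x. f x \<partial>lborel)"
proof -
  have "(\<integral>\<^sup>+ x. f x \<partial>lborel) = (\<integral>\<^sup>+ x. f x \<partial>distr lborel borel ((+) c))"
    by (simp add: lborel_distr_plus)
  also have "\<dots> = (\<integral>\<^sup>+ x. f (c + x) \<partial>lborel)"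
    by (subst nn_integral_distr) auto
  finally show ?thesis by (simp add: add.commute)
qed

lemma nn_integral_lborel_scaleR:
  fixes f :: "'a::euclidean_space \<Rightarrow> ennreal"
  assumes [measurable]: "f \<in> borel_measurable borel" and "c \<noteq> 0"
  shows "ennreal (\<bar>c\<bar> ^ DIM('a)) * (\<integral>\<^sup>+ x. f (c *\<^sub>R x) \<partial>lborel) = (\<integral>\<^sup>+ x. f x \<partial>lborel)"
proof -
  have "(\<integral>\<^sup>+ x. f x \<partial>lborel)
      = (\<integral>\<^sup>+ x. f x \<partial>density (distr lborel borel (\<lambda>x. 0 + c *\<^sub>R x)) (\<lambda>_. \<bar>c\<bar> ^ DIM('a)))"
    using lborel_affine[where 'a='a, OF \<open>c \<noteq> 0\<close>, of 0] by simp
  also have "\<dots> = (\<integral>\<^sup>+ x. ennreal (\<bar>c\<bar> ^ DIM('a)) * f (c *\<^sub>R x) \<partial>lborel)"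
    by (simp add: nn_integral_density nn_integral_distr)
  also have "\<dots> = ennreal (\<bar>c\<bar> ^ DIM('a)) * (\<integral>\<^sup>+ x. f (c *\<^sub>R x) \<partial>lborel)"
    by (rule nn_integral_cmult) simp
  finally show ?thesis ..
qed

lemma lattice_periodic_diff:
  "lattice_periodic f \<Longrightarrow> j \<in> integer_lattice \<Longrightarrow> f (u - j) = f u"
  unfolding lattice_periodic_def by (metis diff_add_cancel)

lemma lattice_periodic_indicator:
  "lattice_periodic (\<lambda>u. u \<in> U) \<Longrightarrow> lattice_periodic (indicator U)"
  by (simp add: lattice_periodic_def indicator_def)

lemma lattice_periodic_translate: "lattice_periodic f \<Longrightarrow> lattice_periodic (\<lambda>u. f (u + c))"
  unfolding lattice_periodic_def by (metis add.assoc add.commute)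

lemma lattice_periodic_mult:
  "lattice_periodic f \<Longrightarrow> lattice_periodic g \<Longrightarrow> lattice_periodic (\<lambda>u. f u * g u)"
  by (simp add: lattice_periodic_def)

text \<open>Cutting \<open>\<real>\<^sup>n\<close> into the lattice translates of the unit cube.\<close>

lemma nn_integral_lattice_periodic_unfold:
  fixes f \<psi> :: "real ^ 'n \<Rightarrow> ennreal"
  assumes [measurable]: "f \<in> borel_measurable borel" "\<psi> \<in> borel_measurable borel"
    and f: "lattice_periodic f"
  shows "(\<integral>\<^sup>+ u. f u * \<psi> u \<partial>lborel)
       = (\<integral>\<^sup>+ w. f w * indicator unit_cube w *
            (\<integral>\<^sup>+ j. \<psi> (w - j) \<partial>count_space integer_lattice) \<partial>lborel)"
proof -
  have "(\<integral>\<^sup>+ u. f u * \<psi> u \<partial>lborel)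
      = (\<integral>\<^sup>+ u. (\<integral>\<^sup>+ j. f u * \<psi> u * indicator unit_cube (u + j) \<partial>count_space integer_lattice) \<partial>lborel)"
    by (intro nn_integral_cong) (simp add: nn_integral_cmult nn_integral_lattice_unit_cube_add)
  also have "\<dots> = (\<integral>\<^sup>+ j. (\<integral>\<^sup>+ u. f u * \<psi> u * indicator unit_cube (u + j) \<partial>lborel) \<partial>count_space integer_lattice)"
    by (rule nn_integral_count_space_nn_integral[OF countable_integer_lattice]) simp
  also have "\<dots> = (\<integral>\<^sup>+ j. (\<integral>\<^sup>+ w. f w * \<psi> (w - j) * indicator unit_cube w \<partial>lborel) \<partial>count_space integer_lattice)"
  proof (rule nn_integral_cong)
    fix j assume "j \<in> space (count_space (integer_lattice :: (real ^ 'n) set))"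
    then have "j \<in> integer_lattice" "- j \<in> integer_lattice" by (simp_all add: integer_lattice_uminus)
    then have "(\<integral>\<^sup>+ u. f u * \<psi> u * indicator unit_cube (u + j) \<partial>lborel)
        = (\<integral>\<^sup>+ w. f (w + - j) * \<psi> (w + - j) * indicator unit_cube (w + - j + j) \<partial>lborel)"
      by (intro nn_integral_lborel_add[symmetric]) simp
    also have "\<dots> = (\<integral>\<^sup>+ w. f w * \<psi> (w - j) * indicator unit_cube w \<partial>lborel)"
      using lattice_periodic_diff[OF f \<open>j \<in> integer_lattice\<close>] by simp
    finally show "(\<integral>\<^sup>+ u. f u * \<psi> u * indicator unit_cube (u + j) \<partial>lborel)
        = (\<integral>\<^sup>+ w. f w * \<psi> (w - j) * indicator unit_cube w \<partial>lborel)" .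
  qed
  also have "\<dots> = (\<integral>\<^sup>+ w. (\<integral>\<^sup>+ j. (f w * indicator unit_cube w) * \<psi> (w - j) \<partial>count_space integer_lattice) \<partial>lborel)"
    by (subst nn_integral_count_space_nn_integral[OF countable_integer_lattice, symmetric])
       (simp_all add: mult_ac)
  also have "\<dots> = (\<integral>\<^sup>+ w. f w * indicator unit_cube w *
            (\<integral>\<^sup>+ j. \<psi> (w - j) \<partial>count_space integer_lattice) \<partial>lborel)"
    by (simp add: nn_integral_cmult)
  finally show ?thesis .
qed

lemma nn_integral_periodic_translate:
  fixes f :: "real ^ 'n \<Rightarrow> ennreal"
  assumes [measurable]: "f \<in> borel_measurable borel" and "lattice_periodic f"
  shows "(\<integral>\<^sup>+ x. f (x + c) * indicator unit_cube x \<partial>lborel)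
       = (\<integral>\<^sup>+ x. f x * indicator unit_cube x \<partial>lborel)"
proof -
  have "(\<integral>\<^sup>+ x. f (x + c) * indicator unit_cube x \<partial>lborel)
      = (\<integral>\<^sup>+ u. f u * indicator unit_cube (u - c) \<partial>lborel)"
    using nn_integral_lborel_add[of "\<lambda>u. f u * indicator unit_cube (u - c)" c] by simp
  also have "\<dots> = (\<integral>\<^sup>+ w. f w * indicator unit_cube w *
      (\<integral>\<^sup>+ j. indicator unit_cube (w - j - c) \<partial>count_space integer_lattice) \<partial>lborel)"
    by (rule nn_integral_lattice_periodic_unfold) (simp_all add: assms)
  also have "\<dots> = (\<integral>\<^sup>+ x. f x * indicator unit_cube x \<partial>lborel)"
  proof -
    have "(\<integral>\<^sup>+ j. indicator unit_cube (w - j - c) \<partial>count_space integer_lattice) = 1" for w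
      using nn_integral_lattice_unit_cube_diff[of "w - c"] by (simp add: diff_diff_eq add.commute)
    then show ?thesis by simp
  qed
  finally show ?thesis .
qed

lemma Ints_diff_less_iff:
  assumes "t \<in> \<int>" "0 \<le> w" "w < 1"
  shows "0 \<le> w - t \<and> w - t < real k \<longleftrightarrow> 1 - real k \<le> t \<and> t \<le> 0"
proof -
  obtain z where z: "t = of_int z" using assms(1) by (auto elim: Ints_cases)
  have "real_of_int z < 1 \<longleftrightarrow> real_of_int z \<le> 0"
    by (metis of_int_le_0_iff of_int_less_1_iff int_one_le_iff_zero_less not_le less_le_not_le)
  moreover have "- real k < real_of_int z \<longleftrightarrow> 1 - real k \<le> real_of_int z"
  proof -
    have "- real k < real_of_int z \<longleftrightarrow> - int k < z"
      by (metis of_int_less_iff of_int_minus of_int_of_nat_eq)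
    also have "\<dots> \<longleftrightarrow> 1 - int k \<le> z" by linarith
    also have "\<dots> \<longleftrightarrow> 1 - real k \<le> real_of_int z"
      by (metis of_int_1 of_int_diff of_int_le_iff of_int_of_nat_eq)
    finally show ?thesis .
  qed
  ultimately show ?thesis using assms(2,3) unfolding z by (intro iffI conjI; linarith)
qed

lemma scaled_diff_in_unit_cube_iff:
  assumes "w \<in> unit_cube" "j \<in> integer_lattice" "0 < k"
  shows "(1 / real k) *\<^sub>R (w - j) \<in> unit_cube \<longleftrightarrow> (\<forall>i. 1 - real k \<le> j $ i \<and> j $ i \<le> 0)"
proof -
  have "0 \<le> (w $ i - j $ i) / real k \<and> (w $ i - j $ i) / real k < 1 \<longleftrightarrow>
        1 - real k \<le> j $ i \<and> j $ i \<le> 0" for i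
    using assms Ints_diff_less_iff[of "j $ i" "w $ i" k]
    by (simp add: unit_cube_def integer_lattice_def divide_simps)
  then show ?thesis by (simp add: unit_cube_def)
qed

text \<open>The substitution \<open>u = k x\<close> turns the unit cube into \<open>k\<^sup>n\<close> lattice translates of it; the
  number of translates is identified by taking \<open>g = 1\<close>.\<close>

lemma nn_integral_periodic_dilate_aux:
  fixes g :: "real ^ 'n \<Rightarrow> ennreal"
  assumes [measurable]: "g \<in> borel_measurable borel" and g: "lattice_periodic g" and "0 < k"
  shows "ennreal (real k ^ CARD('n)) * (\<integral>\<^sup>+ x. g (real k *\<^sub>R x) * indicator unit_cube x \<partial>lborel)
       = (\<integral>\<^sup>+ j. indicator {j :: real ^ 'n. \<forall>i. 1 - real k \<le> j $ i \<and> j $ i \<le> 0} j \<partial>count_space integer_lattice)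
         * (\<integral>\<^sup>+ x. g x * indicator unit_cube x \<partial>lborel)"
proof -
  let ?J = "{j :: real ^ 'n. \<forall>i. 1 - real k \<le> j $ i \<and> j $ i \<le> 0}"
  let ?C = "\<lambda>u. indicator unit_cube ((1 / real k) *\<^sub>R u) :: ennreal"
  have "ennreal (real k ^ CARD('n)) * (\<integral>\<^sup>+ x. g (real k *\<^sub>R x) * indicator unit_cube x \<partial>lborel)
      = ennreal (\<bar>real k\<bar> ^ DIM(real ^ 'n)) * (\<integral>\<^sup>+ x. g (real k *\<^sub>R x) * ?C (real k *\<^sub>R x) \<partial>lborel)"
    using \<open>0 < k\<close> by simp
  also have "\<dots> = (\<integral>\<^sup>+ u. g u * ?C u \<partial>lborel)"
    using \<open>0 < k\<close> by (intro nn_integral_lborel_scaleR[where f="\<lambda>u. g u * ?C u"]) auto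
  also have "\<dots> = (\<integral>\<^sup>+ w. g w * indicator unit_cube w *
      (\<integral>\<^sup>+ j. ?C (w - j) \<partial>count_space integer_lattice) \<partial>lborel)"
    by (rule nn_integral_lattice_periodic_unfold) (simp_all add: g)
  also have "\<dots> = (\<integral>\<^sup>+ w. (\<integral>\<^sup>+ j. indicator ?J j \<partial>count_space integer_lattice) *
      (g w * indicator unit_cube w) \<partial>lborel)"
  proof (intro nn_integral_cong)
    fix w :: "real ^ 'n"
    have "w \<in> unit_cube \<Longrightarrow> (\<integral>\<^sup>+ j. ?C (w - j) \<partial>count_space integer_lattice)
        = (\<integral>\<^sup>+ j. indicator ?J j \<partial>count_space integer_lattice)"
      using scaled_diff_in_unit_cube_iff[of w _ k] \<open>0 < k\<close>
      by (intro nn_integral_cong) (simp add: indicator_def)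
    then show "g w * indicator unit_cube w * (\<integral>\<^sup>+ j. ?C (w - j) \<partial>count_space integer_lattice)
        = (\<integral>\<^sup>+ j. indicator ?J j \<partial>count_space integer_lattice) * (g w * indicator unit_cube w)"
      by (cases "w \<in> unit_cube") (simp_all add: mult_ac)
  qed
  also have "\<dots> = (\<integral>\<^sup>+ j. indicator ?J j \<partial>count_space integer_lattice)
                  * (\<integral>\<^sup>+ x. g x * indicator unit_cube x \<partial>lborel)"
    by (rule nn_integral_cmult) simp
  finally show ?thesis .
qed

lemma nn_integral_periodic_dilate:
  fixes f :: "real ^ 'n \<Rightarrow> ennreal"
  assumes [measurable]: "f \<in> borel_measurable borel" and "lattice_periodic f" and "0 < k"
  shows "(\<integral>\<^sup>+ x. f (real k *\<^sub>R x) * indicator unit_cube x \<partial>lborel)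
       = (\<integral>\<^sup>+ x. f x * indicator unit_cube x \<partial>lborel)"
proof -
  have count: "(\<integral>\<^sup>+ j. indicator {j :: real ^ 'n. \<forall>i. 1 - real k \<le> j $ i \<and> j $ i \<le> 0} j \<partial>count_space integer_lattice)
      = ennreal (real k ^ CARD('n))"
    using nn_integral_periodic_dilate_aux[where g="\<lambda>_ :: real ^ 'n. 1" and k=k] \<open>0 < k\<close>
    by (simp add: lattice_periodic_def emeasure_unit_cube)
  have "ennreal (real k ^ CARD('n)) * (\<integral>\<^sup>+ x. f (real k *\<^sub>R x) * indicator unit_cube x \<partial>lborel)
      = ennreal (real k ^ CARD('n)) * (\<integral>\<^sup>+ x. f x * indicator unit_cube x \<partial>lborel)"
    using nn_integral_periodic_dilate_aux[OF assms] by (simp only: count)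
  with \<open>0 < k\<close> show ?thesis by (simp add: ennreal_mult_cancel_left)
qed

lemma AE_lattice_periodic:
  fixes Q :: "real ^ 'n \<Rightarrow> bool"
  assumes periodic: "lattice_periodic Q" and ae: "AE x in lborel. x \<in> unit_cube \<longrightarrow> Q x"
  shows "AE x in lborel. Q x"
proof -
  obtain B where B: "{x \<in> space lborel. \<not> (x \<in> unit_cube \<longrightarrow> Q x)} \<subseteq> B"
    "emeasure lborel B = 0" "B \<in> sets lborel"
    using ae by (rule AE_E)
  then have "B \<in> null_sets lborel" by (simp add: null_sets_def)
  have "AE x in lborel. x - j \<notin> B" for j
    using AE_not_in[OF null_sets_translation[OF \<open>B \<in> null_sets lborel\<close>, of j]] by simp
  then have "AE x in lborel. \<forall>j\<in>integer_lattice. x - j \<notin> B"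
    by (simp add: AE_ball_countable countable_integer_lattice)
  then show ?thesis
  proof (rule AE_mp[OF _ AE_I2], intro impI)
    fix x :: "real ^ 'n" assume "\<forall>j\<in>integer_lattice. x - j \<notin> B"
    moreover have "x - vfloor x \<in> unit_cube"
      using add_in_unit_cube_iff[OF integer_lattice_uminus[OF vfloor_in_integer_lattice[of x]], of x]
      by simp
    ultimately have "Q (x - vfloor x)" using B(1) vfloor_in_integer_lattice[of x] by auto
    then show "Q x"
      using lattice_periodic_diff[OF periodic vfloor_in_integer_lattice] by simp
  qed
qed

section \<open>The events \<open>y - n x \<in> U\<close>\<close>

definition cube_pair_measure :: "((real ^ 'n) \<times> (real ^ 'n)) measure" where
  "cube_pair_measure = density (lborel \<Otimes>\<^sub>M lborel) (indicator (unit_cube \<times> unit_cube))"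

definition shift_event :: "nat \<Rightarrow> (real ^ 'n) set \<Rightarrow> ((real ^ 'n) \<times> (real ^ 'n)) set" where
  "shift_event n U = {(x, y). y - of_nat n *\<^sub>R x \<in> U}"

lemma sets_cube_pair_measure [simp]: "sets cube_pair_measure = sets (lborel \<Otimes>\<^sub>M lborel)"
  by (simp add: cube_pair_measure_def)

lemma shift_event_sets:
  assumes [measurable]: "U \<in> sets borel"
  shows "shift_event n U \<in> sets (lborel \<Otimes>\<^sub>M lborel)"
proof -
  have "shift_event n U = (\<lambda>z. snd z - of_nat n *\<^sub>R fst z) -` U \<inter> space (lborel \<Otimes>\<^sub>M lborel)"
    by (auto simp: shift_event_def space_pair_measure)
  also have "\<dots> \<in> sets (lborel \<Otimes>\<^sub>M lborel)" by measurable
  finally show ?thesis .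
qed

lemma emeasure_cube_pair_measure:
  assumes "A \<in> sets (lborel \<Otimes>\<^sub>M lborel)"
  shows "emeasure cube_pair_measure A = (\<integral>\<^sup>+ x. \<integral>\<^sup>+ y.
           indicator unit_cube x * indicator unit_cube y * indicator A (x, y) \<partial>lborel \<partial>lborel)"
proof -
  have [measurable]: "A \<in> sets (borel \<Otimes>\<^sub>M borel)"
    using assms by (simp add: sets_pair_measure_cong[OF sets_lborel sets_lborel])
  have "emeasure cube_pair_measure A
      = (\<integral>\<^sup>+ z. indicator (unit_cube \<times> unit_cube) z * indicator A z \<partial>(lborel \<Otimes>\<^sub>M lborel))"
    unfolding cube_pair_measure_def by (subst emeasure_density) auto
  also have "\<dots> = (\<integral>\<^sup>+ x. \<integral>\<^sup>+ y. indicator (unit_cube \<times> unit_cube) (x, y) * indicator A (x, y)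
      \<partial>lborel \<partial>lborel)"
    by (rule lborel.nn_integral_fst[symmetric]) measurable
  finally show ?thesis by (simp add: indicator_times)
qed

lemma prob_space_cube_pair_measure:
  "prob_space (cube_pair_measure :: ((real ^ 'n) \<times> (real ^ 'n)) measure)"
proof
  let ?P = "cube_pair_measure :: ((real ^ 'n) \<times> (real ^ 'n)) measure"
  have "emeasure ?P (space ?P) = emeasure (lborel \<Otimes>\<^sub>M lborel) (unit_cube \<times> unit_cube :: ((real ^ 'n) \<times> (real ^ 'n)) set)"
    unfolding cube_pair_measure_def
    using sets.top[of "borel \<Otimes>\<^sub>M borel :: ((real ^ 'n) \<times> (real ^ 'n)) measure"]
    by (subst emeasure_density) (auto simp: space_pair_measure nn_integral_indicator)
  also have "\<dots> = 1"
    using lborel.emeasure_pair_measure_Times[of unit_cube lborel unit_cube]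
    by (simp add: unit_cube_borel emeasure_unit_cube)
  finally show "emeasure ?P (space ?P) = 1" .
qed

lemma emeasure_Int_unit_cube:
  fixes U :: "(real ^ 'n) set"
  shows "U \<in> sets borel \<Longrightarrow> emeasure lborel (U \<inter> unit_cube) = (\<integral>\<^sup>+ x. indicator U x * indicator unit_cube x \<partial>lborel)"
  by (simp add: indicator_inter_arith[symmetric])

lemma emeasure_Int_unit_cube_finite:
  fixes U :: "(real ^ 'n) set"
  shows "emeasure lborel (U \<inter> unit_cube) < \<infinity>"
proof -
  have "emeasure lborel (U \<inter> unit_cube) \<le> emeasure lborel (unit_cube :: (real ^ 'n) set)"
    by (rule emeasure_mono) (auto simp: unit_cube_borel)
  then show ?thesis by (simp add: emeasure_unit_cube order_le_less_trans)
qed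

lemma emeasure_Int_unit_cube_translate:
  fixes U :: "(real ^ 'n) set"
  assumes [measurable]: "U \<in> sets borel" and U: "lattice_periodic (\<lambda>u. u \<in> U)"
  shows "emeasure lborel ({x. x + c \<in> U} \<inter> unit_cube) = emeasure lborel (U \<inter> unit_cube)"
proof -
  have "{x. x + c \<in> U} \<in> sets borel" by measurable
  then have "emeasure lborel ({x. x + c \<in> U} \<inter> unit_cube)
      = (\<integral>\<^sup>+ x. indicator U (x + c) * indicator unit_cube x \<partial>lborel)"
    by (simp add: emeasure_Int_unit_cube indicator_def)
  also have "\<dots> = emeasure lborel (U \<inter> unit_cube)"
    by (simp add: nn_integral_periodic_translate lattice_periodic_indicator[OF U] emeasure_Int_unit_cube)
  finally show ?thesis .
qed

lemma indicator_shift_event: "indicator (shift_event n U) (x, y) = indicator U (y - of_nat n *\<^sub>R x)"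
  by (simp add: shift_event_def indicator_def)

lemma emeasure_shift_event:
  fixes U :: "(real ^ 'n) set"
  assumes [measurable]: "U \<in> sets borel" and U: "lattice_periodic (\<lambda>u. u \<in> U)"
  shows "emeasure cube_pair_measure (shift_event n U) = emeasure lborel (U \<inter> unit_cube)"
proof -
  let ?C = "indicator unit_cube :: real ^ 'n \<Rightarrow> ennreal"
  have "emeasure cube_pair_measure (shift_event n U)
      = (\<integral>\<^sup>+ x. \<integral>\<^sup>+ y. ?C x * (indicator U (y - of_nat n *\<^sub>R x) * ?C y) \<partial>lborel \<partial>lborel)"
    by (subst emeasure_cube_pair_measure[OF shift_event_sets[OF assms(1)]])
       (simp add: indicator_shift_event mult_ac)
  also have "\<dots> = (\<integral>\<^sup>+ x. ?C x * emeasure lborel (U \<inter> unit_cube) \<partial>lborel)"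
  proof -
    have "(\<integral>\<^sup>+ y. indicator U (y - of_nat n *\<^sub>R x) * ?C y \<partial>lborel) = emeasure lborel (U \<inter> unit_cube)"
      for x
      using nn_integral_periodic_translate[OF _ lattice_periodic_indicator[OF U], of "- (of_nat n *\<^sub>R x)"]
      by (simp add: emeasure_Int_unit_cube)
    then show ?thesis by (simp add: nn_integral_cmult)
  qed
  also have "\<dots> = emeasure lborel (U \<inter> unit_cube)"
    by (simp add: nn_integral_multc emeasure_unit_cube)
  finally show ?thesis .
qed

lemma nn_integral_indicator_dilate_translate:
  fixes U :: "(real ^ 'n) set"
  assumes [measurable]: "U \<in> sets borel" and U: "lattice_periodic (\<lambda>u. u \<in> U)" and "0 < k"
  shows "(\<integral>\<^sup>+ x. indicator U (y + of_nat k *\<^sub>R x) * indicator unit_cube x \<partial>lborel)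
       = emeasure lborel (U \<inter> unit_cube)"
proof -
  have periodic: "lattice_periodic (indicator U :: real ^ 'n \<Rightarrow> ennreal)"
    using U by (rule lattice_periodic_indicator)
  have "(\<integral>\<^sup>+ x. indicator U (y + of_nat k *\<^sub>R x) * indicator unit_cube x \<partial>lborel)
      = (\<integral>\<^sup>+ x. indicator U (x + y) * indicator unit_cube x \<partial>lborel)"
    using nn_integral_periodic_dilate[of "\<lambda>x. indicator U (x + y)" k] \<open>0 < k\<close>
    by (simp add: lattice_periodic_translate periodic add.commute)
  also have "\<dots> = emeasure lborel (U \<inter> unit_cube)"
    by (simp add: nn_integral_periodic_translate periodic emeasure_Int_unit_cube)
  finally show ?thesis .
qed

text \<open>For \<open>n < m\<close> integrate first over \<open>y\<close>, translated by \<open>m x\<close>, and then over \<open>x\<close>, dilated by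
  \<open>m - n\<close>: both substitutions preserve the integrals of periodic functions over the cube.\<close>

lemma emeasure_shift_event_Int_less:
  fixes U V :: "(real ^ 'n) set"
  assumes [measurable]: "U \<in> sets borel" "V \<in> sets borel"
    and U: "lattice_periodic (\<lambda>u. u \<in> U)" and V: "lattice_periodic (\<lambda>u. u \<in> V)" and "n < m"
  shows "emeasure cube_pair_measure (shift_event n U \<inter> shift_event m V)
       = emeasure lborel (U \<inter> unit_cube) * emeasure lborel (V \<inter> unit_cube)"
proof -
  define k where "k = m - n"
  have "0 < k" using \<open>n < m\<close> by (simp add: k_def)
  let ?U = "indicator U :: real ^ 'n \<Rightarrow> ennreal" and ?V = "indicator V :: real ^ 'n \<Rightarrow> ennreal"
  let ?C = "indicator unit_cube :: real ^ 'n \<Rightarrow> ennreal"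
  have pU: "lattice_periodic ?U" and pV: "lattice_periodic ?V"
    using U V by (simp_all add: lattice_periodic_indicator)
  have y_integral: "(\<integral>\<^sup>+ y. ?U (y - of_nat n *\<^sub>R x) * ?V (y - of_nat m *\<^sub>R x) * ?C y \<partial>lborel)
      = (\<integral>\<^sup>+ y. ?U (y + of_nat k *\<^sub>R x) * ?V y * ?C y \<partial>lborel)" for x
  proof -
    have "lattice_periodic (\<lambda>y. ?U (y + - (of_nat n *\<^sub>R x)) * ?V (y + - (of_nat m *\<^sub>R x)))"
      by (intro lattice_periodic_mult lattice_periodic_translate pU pV)
    then have "lattice_periodic (\<lambda>y. ?U (y - of_nat n *\<^sub>R x) * ?V (y - of_nat m *\<^sub>R x))"
      by simp
    moreover have shift: "y + of_nat m *\<^sub>R x - of_nat n *\<^sub>R x = y + of_nat k *\<^sub>R x" for y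
      using \<open>n < m\<close> by (simp add: k_def of_nat_diff scaleR_diff_left algebra_simps)
    ultimately show ?thesis
      using nn_integral_periodic_translate[of "\<lambda>y. ?U (y - of_nat n *\<^sub>R x) * ?V (y - of_nat m *\<^sub>R x)"
          "of_nat m *\<^sub>R x"]
      by (simp add: shift)
  qed
  have "emeasure cube_pair_measure (shift_event n U \<inter> shift_event m V)
      = (\<integral>\<^sup>+ x. \<integral>\<^sup>+ y. ?C x * (?U (y - of_nat n *\<^sub>R x) * ?V (y - of_nat m *\<^sub>R x) * ?C y) \<partial>lborel \<partial>lborel)"
    by (subst emeasure_cube_pair_measure[OF sets.Int[OF shift_event_sets[OF assms(1)] shift_event_sets[OF assms(2)]]])
       (simp add: indicator_inter_arith indicator_shift_event mult_ac)
  also have "\<dots> = (\<integral>\<^sup>+ x. \<integral>\<^sup>+ y. ?C x * (?U (y + of_nat k *\<^sub>R x) * ?V y * ?C y) \<partial>lborel \<partial>lborel)"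
    by (simp add: nn_integral_cmult y_integral)
  also have "\<dots> = (\<integral>\<^sup>+ y. \<integral>\<^sup>+ x. ?V y * ?C y * (?U (y + of_nat k *\<^sub>R x) * ?C x) \<partial>lborel \<partial>lborel)"
    by (subst lborel_pair.Fubini') (simp_all add: mult_ac)
  also have "\<dots> = (\<integral>\<^sup>+ y. ?V y * ?C y * emeasure lborel (U \<inter> unit_cube) \<partial>lborel)"
    by (simp add: nn_integral_cmult nn_integral_indicator_dilate_translate U \<open>0 < k\<close>)
  also have "\<dots> = emeasure lborel (U \<inter> unit_cube) * emeasure lborel (V \<inter> unit_cube)"
    by (simp add: nn_integral_multc emeasure_Int_unit_cube mult.commute)
  finally show ?thesis .
qed

lemma emeasure_shift_event_Int:
  fixes U V :: "(real ^ 'n) set"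
  assumes "U \<in> sets borel" "V \<in> sets borel"
    and "lattice_periodic (\<lambda>u. u \<in> U)" "lattice_periodic (\<lambda>u. u \<in> V)" and "n \<noteq> m"
  shows "emeasure cube_pair_measure (shift_event n U \<inter> shift_event m V)
       = emeasure lborel (U \<inter> unit_cube) * emeasure lborel (V \<inter> unit_cube)"
proof (cases "n < m")
  case False
  then have "m < n" using \<open>n \<noteq> m\<close> by simp
  then show ?thesis
    using emeasure_shift_event_Int_less[OF assms(2,1,4,3)] by (simp add: Int_commute mult.commute)
qed (use emeasure_shift_event_Int_less[OF assms(1-4)] in simp)

lemma measure_shift_event:
  fixes U :: "(real ^ 'n) set"
  assumes "U \<in> sets borel" "lattice_periodic (\<lambda>u. u \<in> U)"
  shows "measure cube_pair_measure (shift_event n U) = measure lborel (U \<inter> unit_cube)"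
  using emeasure_shift_event[OF assms] by (simp add: measure_def)

lemma measure_shift_event_Int:
  fixes U V :: "(real ^ 'n) set"
  assumes "U \<in> sets borel" "V \<in> sets borel"
    and "lattice_periodic (\<lambda>u. u \<in> U)" "lattice_periodic (\<lambda>u. u \<in> V)" and "n \<noteq> m"
  shows "measure cube_pair_measure (shift_event n U \<inter> shift_event m V)
       = measure lborel (U \<inter> unit_cube) * measure lborel (V \<inter> unit_cube)"
  using emeasure_shift_event_Int[OF assms] by (simp add: measure_def enn2real_mult)

lemma shift_event_add_lattice:
  fixes U :: "(real ^ 'n) set"
  assumes "lattice_periodic (\<lambda>u. u \<in> U)" "j \<in> integer_lattice"
  shows "(x + j, y) \<in> shift_event n U \<longleftrightarrow> (x, y) \<in> shift_event n U"
proof -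
  have "(x + j, y) \<in> shift_event n U \<longleftrightarrow> (y - of_nat n *\<^sub>R x) - of_nat n *\<^sub>R j \<in> U"
    by (simp add: shift_event_def algebra_simps)
  also have "\<dots> \<longleftrightarrow> (x, y) \<in> shift_event n U"
    using lattice_periodic_diff[OF assms(1) integer_lattice_scaleR_of_nat[OF assms(2)]]
    by (simp add: shift_event_def)
  finally show ?thesis .
qed

lemma AE_lborel_of_AE_cube_pair_measure:
  fixes Q :: "(real ^ 'n) \<times> (real ^ 'n) \<Rightarrow> bool"
  assumes "AE z in cube_pair_measure. Q z"
    and periodic: "\<And>x y j. j \<in> integer_lattice \<Longrightarrow> Q (x + j, y) = Q (x, y)"
  shows "AE x in lborel. AE y in lborel. y \<in> unit_cube \<longrightarrow> Q (x, y)"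
proof (rule AE_lattice_periodic)
  show "lattice_periodic (\<lambda>x. AE y in lborel. y \<in> unit_cube \<longrightarrow> Q (x, y))"
    by (simp add: lattice_periodic_def periodic)
  have "AE z in lborel \<Otimes>\<^sub>M lborel. 0 < (indicator (unit_cube \<times> unit_cube) z :: ennreal) \<longrightarrow> Q z"
    using assms(1) unfolding cube_pair_measure_def by (subst (asm) AE_density) auto
  then have "AE z in lborel \<Otimes>\<^sub>M lborel. z \<in> unit_cube \<times> unit_cube \<longrightarrow> Q z"
    by (rule AE_mp[OF _ AE_I2]) simp
  then have "AE x in lborel. AE y in lborel. (x, y) \<in> unit_cube \<times> unit_cube \<longrightarrow> Q (x, y)"
    by (rule lborel_pair.AE_pair)
  then show "AE x in lborel. x \<in> unit_cube \<longrightarrow> (AE y in lborel. y \<in> unit_cube \<longrightarrow> Q (x, y))"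
    by eventually_elim (auto elim!: eventually_mono)
qed

section \<open>Neighbourhoods of the integer lattice\<close>

definition near_lattice :: "(real ^ 'n \<Rightarrow> real) \<Rightarrow> real \<Rightarrow> (real ^ 'n) set" where
  "near_lattice N \<rho> = {u. \<exists>j\<in>integer_lattice. N (u - j) < \<rho>}"

lemma near_lattice_periodic:
  fixes N :: "real ^ 'n \<Rightarrow> real"
  shows "lattice_periodic (\<lambda>u. u \<in> near_lattice N \<rho>)"
  unfolding lattice_periodic_def
proof (intro allI impI iffI)
  fix u j :: "real ^ 'n" assume j: "j \<in> integer_lattice"
  show "u \<in> near_lattice N \<rho>" if near: "u + j \<in> near_lattice N \<rho>"
  proof -
    obtain j' where "j' \<in> integer_lattice" "N (u + j - j') < \<rho>"
      using near unfolding near_lattice_def by blast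
    then show ?thesis unfolding near_lattice_def
      using integer_lattice_add[OF _ integer_lattice_uminus[OF j]]
      by (intro CollectI bexI[of _ "j' - j"]) (simp_all add: algebra_simps)
  qed
  show "u + j \<in> near_lattice N \<rho>" if near: "u \<in> near_lattice N \<rho>"
  proof -
    obtain j' where "j' \<in> integer_lattice" "N (u - j') < \<rho>"
      using near unfolding near_lattice_def by blast
    then show ?thesis unfolding near_lattice_def
      using integer_lattice_add[OF _ j]
      by (intro CollectI bexI[of _ "j' + j"]) (simp_all add: algebra_simps)
  qed
qed

lemma near_lattice_borel:
  assumes "is_norm N"
  shows "near_lattice N \<rho> \<in> sets borel"
proof (rule borel_open)
  have "near_lattice N \<rho> = (\<Union>j\<in>integer_lattice. (\<lambda>u. N (u - j)) -` {..<\<rho>})"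
    by (auto simp: near_lattice_def)
  moreover have "continuous_on UNIV (\<lambda>u. N (u - j))" for j
    by (intro continuous_on_compose2[OF is_norm_continuous_on[OF assms]] continuous_intros) auto
  ultimately show "open (near_lattice N \<rho>)"
    by (auto intro!: open_vimage)
qed

text \<open>A Euclidean ball of radius \<open>\<rho> / C\<close> around the centre \<open>h\<close> of the cube, translated by
  \<open>-h\<close>, lies in \<open>near_lattice N \<rho>\<close>; for small \<open>\<rho>\<close> the ball also lies in the cube.\<close>

lemma ball_subset_near_lattice:
  fixes N :: "real ^ 'n \<Rightarrow> real"
  assumes C: "0 < C" "\<And>v. N v \<le> C * norm v" and c: "0 < c" "\<And>v i. c * \<bar>v $ i\<bar> \<le> N v"
    and "\<rho> \<le> c / 2"
  shows "ball (\<chi> i. 1 / 2) (\<rho> / C) \<subseteq> {x. x - (\<chi> i. 1 / 2) \<in> near_lattice N \<rho>} \<inter> unit_cube"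
proof
  fix x :: "real ^ 'n" assume "x \<in> ball (\<chi> i. 1 / 2) (\<rho> / C)"
  then have N_less: "N (x - (\<chi> i. 1 / 2)) < \<rho>"
    using C(2)[of "x - (\<chi> i. 1 / 2)"] C(1) by (simp add: dist_norm norm_minus_commute field_simps)
  then have "x - (\<chi> i. 1 / 2) \<in> near_lattice N \<rho>"
    unfolding near_lattice_def by (intro CollectI bexI[of _ 0]) (simp_all add: integer_lattice_def)
  moreover have "0 \<le> x $ i \<and> x $ i < 1" for i
  proof -
    have "c * \<bar>x $ i - 1 / 2\<bar> < c * (1 / 2)"
      using c(2)[of "x - (\<chi> i. 1 / 2)" i] N_less \<open>\<rho> \<le> c / 2\<close> by simp
    then have "\<bar>x $ i - 1 / 2\<bar> < 1 / 2" using c(1) by simp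
    then show ?thesis unfolding abs_less_iff by linarith
  qed
  ultimately show "x \<in> {x. x - (\<chi> i. 1 / 2) \<in> near_lattice N \<rho>} \<inter> unit_cube"
    by (simp add: unit_cube_def)
qed

lemma measure_near_lattice_lower_bound:
  fixes N :: "real ^ 'n \<Rightarrow> real"
  assumes N: "is_norm N"
  obtains \<kappa> \<epsilon> where "0 < \<kappa>" "0 < \<epsilon>"
    "\<And>\<rho>. 0 \<le> \<rho> \<Longrightarrow> \<rho> \<le> \<epsilon> \<Longrightarrow> \<kappa> * \<rho> ^ CARD('n) \<le> measure lborel (near_lattice N \<rho> \<inter> unit_cube)"
proof -
  obtain C where C: "0 < C" "\<And>v. N v \<le> C * norm v" using is_norm_le_norm[OF N] by blast
  obtain c where c: "0 < c" "\<And>v i. c * \<bar>v $ i\<bar> \<le> N v" using is_norm_ge_abs_component[OF N] by blast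
  define \<kappa> where "\<kappa> = unit_ball_vol (real CARD('n)) / C ^ CARD('n)"
  have "\<kappa> * \<rho> ^ CARD('n) \<le> measure lborel (near_lattice N \<rho> \<inter> unit_cube)"
    if \<rho>: "0 \<le> \<rho>" "\<rho> \<le> c / 2" for \<rho>
  proof -
    have [measurable]: "near_lattice N \<rho> \<in> sets borel" by (rule near_lattice_borel[OF N])
    have "ennreal (\<kappa> * \<rho> ^ CARD('n)) = emeasure lborel (ball (\<chi> i. 1 / 2 :: real ^ 'n) (\<rho> / C))"
      using \<rho> C(1) by (simp add: \<kappa>_def emeasure_ball power_divide)
    also have "\<dots> \<le> emeasure lborel ({x. x - (\<chi> i. 1 / 2) \<in> near_lattice N \<rho>} \<inter> unit_cube)"
      by (intro emeasure_mono ball_subset_near_lattice[OF C c \<rho>(2)]) measurable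
    also have "\<dots> = emeasure lborel (near_lattice N \<rho> \<inter> unit_cube)"
      using emeasure_Int_unit_cube_translate[OF _ near_lattice_periodic, of N \<rho> "- (\<chi> i. 1 / 2)"]
      by simp
    also have "\<dots> = ennreal (measure lborel (near_lattice N \<rho> \<inter> unit_cube))"
      using emeasure_Int_unit_cube_finite[of "near_lattice N \<rho>"]
      by (intro emeasure_eq_ennreal_measure) (simp add: less_top)
    finally show ?thesis by simp
  qed
  then show ?thesis using that[of \<kappa> "c / 2"] C(1) c(1) by (simp add: \<kappa>_def)
qed

lemma P_class_nonneg:
  assumes "P_class d r" "1 \<le> n"
  shows "0 \<le> r n"
proof -
  have "r m \<le> r n" if "n \<le> m" for m
    using that
  proof (induction m rule: dec_induct)
    case (step m)
    then show ?case using assms unfolding P_class_def by (meson order.trans le_trans)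
  qed simp
  moreover have "r \<longlonglongrightarrow> 0" using assms(1) by (simp add: P_class_def)
  ultimately show ?thesis by (intro LIMSEQ_le_const2) auto
qed

lemma not_summable_measure_shift_event:
  fixes N :: "real ^ 'n \<Rightarrow> real"
  assumes N: "is_norm N" and r: "P_class CARD('n) r"
  shows "\<not> summable (\<lambda>n. measure cube_pair_measure (shift_event n (near_lattice N (r n))))"
proof
  obtain \<kappa> \<epsilon> where \<kappa>: "0 < \<kappa>" and "0 < \<epsilon>" and lower:
    "\<And>\<rho>. 0 \<le> \<rho> \<Longrightarrow> \<rho> \<le> \<epsilon> \<Longrightarrow> \<kappa> * \<rho> ^ CARD('n) \<le> measure lborel (near_lattice N \<rho> \<inter> unit_cube)"
    using measure_near_lattice_lower_bound[OF N] by blast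
  have "eventually (\<lambda>n. r n < \<epsilon>) sequentially"
    using r \<open>0 < \<epsilon>\<close> by (intro order_tendstoD) (auto simp: P_class_def)
  then have "eventually (\<lambda>n. norm (\<kappa> * r n ^ CARD('n))
      \<le> measure cube_pair_measure (shift_event n (near_lattice N (r n)))) sequentially"
    using eventually_ge_at_top[of 1]
  proof eventually_elim
    case (elim n)
    then have "0 \<le> r n" using P_class_nonneg[OF r] by simp
    then show ?case
      using lower[of "r n"] elim \<kappa>
      by (simp add: measure_shift_event near_lattice_borel[OF N] near_lattice_periodic)
  qed
  moreover assume "summable (\<lambda>n. measure cube_pair_measure (shift_event n (near_lattice N (r n))))"
  ultimately have "summable (\<lambda>n. \<kappa> * r n ^ CARD('n))" by (rule summable_comparison_test_ev)
  then have "summable (\<lambda>n. r (Suc n) ^ CARD('n))"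
    using \<kappa> summable_Suc_iff[of "\<lambda>n. r n ^ CARD('n)"] by (simp add: summable_cmult_iff)
  with r show False by (simp add: P_class_def)
qed

section \<open>Fractional parts of multiples\<close>

lemma vfrac_eq_add_lattice:
  assumes "j \<in> integer_lattice" and close: "\<And>i. \<bar>y $ i - a $ i - j $ i\<bar> < \<delta>"
    and inside: "\<And>i. \<delta> \<le> y $ i \<and> y $ i \<le> 1 - \<delta>"
  shows "vfrac a = a + j"
proof -
  have "frac (a $ i) = a $ i + j $ i" for i
    unfolding frac_unique_iff
    using assms(1) close[of i] inside[of i] by (auto simp: integer_lattice_def abs_less_iff)
  then show ?thesis by (simp add: vfrac_def vec_eq_iff)
qed

text \<open>Membership in the \<open>n\<close>-th event says \<open>N (y - n x - j) < r n\<close> for a lattice point \<open>j\<close>; once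
  \<open>r n\<close> is small compared with the distance of \<open>y\<close> to the boundary of the cube, \<open>n x + j\<close> is
  the fractional part of \<open>n x\<close>.\<close>

lemma frequently_near_vfrac:
  fixes N :: "real ^ 'n \<Rightarrow> real"
  assumes N: "is_norm N" and "r \<longlonglongrightarrow> 0" and y: "y \<in> open_cube"
    and "\<exists>\<^sub>\<infinity>n. (x, y) \<in> shift_event n (near_lattice N (r n))"
  shows "\<exists>\<^sub>\<infinity>n. n \<ge> 1 \<and> N (y - vfrac (of_nat n *\<^sub>R x)) < r n"
proof -
  obtain c where c: "0 < c" "\<And>v i. c * \<bar>v $ i\<bar> \<le> N v" using is_norm_ge_abs_component[OF N] by blast
  define \<delta> where "\<delta> = Min (range (\<lambda>i. min (y $ i) (1 - y $ i)))"
  have "0 < \<delta>" using y unfolding \<delta>_def open_cube_def by (subst Min_gr_iff) auto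
  have inside: "\<delta> \<le> y $ i \<and> y $ i \<le> 1 - \<delta>" for i
  proof -
    have "\<delta> \<le> min (y $ i) (1 - y $ i)" unfolding \<delta>_def by (rule Min_le) auto
    then show ?thesis by simp
  qed
  have "eventually (\<lambda>n. r n < c * \<delta> \<and> 1 \<le> n) sequentially"
    using \<open>r \<longlonglongrightarrow> 0\<close> c(1) \<open>0 < \<delta>\<close>
    by (intro eventually_conj order_tendstoD(2) eventually_ge_at_top) auto
  with assms(4) have "\<exists>\<^sub>\<infinity>n. (x, y) \<in> shift_event n (near_lattice N (r n)) \<and> r n < c * \<delta> \<and> 1 \<le> n"
    unfolding cofinite_eq_sequentially by (rule frequently_eventually_frequently)
  then show ?thesis
    unfolding cofinite_eq_sequentially
  proof (rule frequently_elim1)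
    fix n assume n: "(x, y) \<in> shift_event n (near_lattice N (r n)) \<and> r n < c * \<delta> \<and> 1 \<le> n"
    then obtain j where j: "j \<in> integer_lattice" and near: "N (y - of_nat n *\<^sub>R x - j) < r n"
      by (auto simp: shift_event_def near_lattice_def)
    have "\<bar>y $ i - (of_nat n *\<^sub>R x) $ i - j $ i\<bar> < \<delta>" for i
    proof -
      have "c * \<bar>(y - of_nat n *\<^sub>R x - j) $ i\<bar> < c * \<delta>"
        using c(2)[of "y - of_nat n *\<^sub>R x - j" i] near n by linarith
      then show ?thesis using c(1) by (simp add: mult_less_cancel_left_pos)
    qed
    then have "vfrac (of_nat n *\<^sub>R x) = of_nat n *\<^sub>R x + j"
      by (rule vfrac_eq_add_lattice[OF j _ inside])
    then show "n \<ge> 1 \<and> N (y - vfrac (of_nat n *\<^sub>R x)) < r n"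
      using n near by (simp add: diff_diff_eq)
  qed
qed

lemma open_cube_subset_unit_cube: "open_cube \<subseteq> unit_cube"
  by (auto simp: open_cube_def unit_cube_def less_imp_le)

theorem theorem11p1:
  fixes N :: "real ^ 'n \<Rightarrow> real" and r :: "nat \<Rightarrow> real"
  assumes "is_norm N"
    and "P_class CARD('n) r"
  shows "AE x in lebesgue.
           (AE y in lebesgue. y \<in> open_cube \<longrightarrow>
              (\<exists>\<^sub>\<infinity>n. n \<ge> 1 \<and> N (y - vfrac (of_nat n *\<^sub>R x)) < r n))"
proof -
  let ?P = "cube_pair_measure :: ((real ^ 'n) \<times> (real ^ 'n)) measure"
  let ?E = "\<lambda>n. shift_event n (near_lattice N (r n))"
  interpret P: prob_space ?P by (rule prob_space_cube_pair_measure)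
  have "AE z in ?P. \<exists>\<^sub>\<infinity>n. z \<in> ?E n"
  proof (rule P.AE_frequently_quasi_indep)
    show "?E n \<in> P.events" for n
      unfolding sets_cube_pair_measure by (rule shift_event_sets[OF near_lattice_borel[OF assms(1)]])
    show "P.prob (?E n \<inter> ?E m) \<le> P.prob (?E n) * P.prob (?E m)" if "n \<noteq> m" for n m
      using that by (simp add: measure_shift_event_Int measure_shift_event near_lattice_borel[OF assms(1)]
          near_lattice_periodic)
  qed (rule not_summable_measure_shift_event[OF assms])
  then have "AE x in lborel. AE y in lborel. y \<in> unit_cube \<longrightarrow> (\<exists>\<^sub>\<infinity>n. (x, y) \<in> ?E n)"
    by (rule AE_lborel_of_AE_cube_pair_measure) (simp add: shift_event_add_lattice near_lattice_periodic)
  moreover have "r \<longlonglongrightarrow> 0" using assms(2) by (simp add: P_class_def)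
  ultimately have "AE x in lborel. AE y in lborel. y \<in> open_cube \<longrightarrow>
      (\<exists>\<^sub>\<infinity>n. n \<ge> 1 \<and> N (y - vfrac (of_nat n *\<^sub>R x)) < r n)"
    using frequently_near_vfrac[OF assms(1)] open_cube_subset_unit_cube
    by (auto elim!: eventually_mono)
  then show ?thesis by (auto intro!: AE_completion elim!: eventually_mono)
qed

end
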